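(* Suppose $w$ satisfies (A1) and that (A2s) holds for every $\delta\in(0,1/2)$. Then there is a constant $C>0$ independent of $\delta$ such that for every $\delta\in(0,1/2)$ and every $x\in\Omega$, $a_\delta(x)-\int_0^1\widetilde w_\delta(x,y)\,dy\ \ge\ C\,\delta\, b_\delta(x).$
   Context: Throughout, $\Omega=(0,1)$, $\delta\in(0,1/2)$, $|\cdot|$ applied to a set denotes Lebesgue measure, and $\chi_A$ denotes the indicator function of a set $A$. A function $w:[0,\infty)\to[0,\infty)$ satisfies (A1) if $w$ is continuous and nonincreasing on $[0,1)$, positive on $(0,1)$, $w(r)=0$ for $r\ge 1$, and $\int_{\mathbb R} w(|z|)|z|^2\,dz=2$. Set $w_\delta(x,y)=\delta^{-3}w(|x-y|/\delta)$, $a_\delta(x)=\int_0^1 w_\delta(x,y)\,dy$, and $b_\delta(x)=\frac{2}{(x+\delta)^2}\int_{x-\delta}^{0}(x-y)w_\delta(x,y)\,dy$ for $x\in(0,\delta)$, $b_\delta(x)=\frac{2}{(1-x+\delta)^2}\int_{1}^{x+\delta}(y-x)w_\delta(x,y)\,dy$ for $x\in(1-\delta,1)$, and $b_\delta(x)=0$ otherwise. Define $\widetilde w_\delta(x,y)=|w_\delta(x,y)-b_\delta(x)\chi_{(0,\delta)}(|y-x|)|$. Condition (A2s) (for a given $\delta$): for every $x\in\Omega$, $|\{y\in\Omega: w_\delta(x,y)-b_\delta(x)\chi_{[0,\delta]}(|y-x|)\ge 0\}|\ \ge\ |\{y\in\Omega: w_\delta(x,y)-b_\delta(x)\chi_{[0,\delta]}(|y-x|)\le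 0\}|$. *)

theory Defs
  imports "HOL-Analysis.Analysis"
begin

text \<open>Kernel w : [0,inf) -> [0,inf), represented as a real function; only
  nonnegative arguments are ever used.\<close>

definition A1 :: "(real \<Rightarrow> real) \<Rightarrow> bool" where
  "A1 w \<longleftrightarrow>
     (\<forall>r\<ge>0. w r \<ge> 0) \<and>
     continuous_on {0..<1} w \<and>
     (\<forall>r s. 0 \<le> r \<and> r \<le> s \<and> s < 1 \<longrightarrow> w s \<le> w r) \<and>
     (\<forall>r\<in>{0<..<1}. w r > 0) \<and>
     (\<forall>r\<ge>1. w r = 0) \<and>
     (LINT z|lborel. w \<bar>z\<bar> * \<bar>z\<bar>^2) = 2"

definition w_delta :: "(real \<Rightarrow> real) \<Rightarrow> real \<Rightarrow> real \<Rightarrow> real \<Rightarrow> real" where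
  "w_delta w \<delta> x y = \<delta> powi (-3) * w (\<bar>x - y\<bar> / \<delta>)"

definition a_delta :: "(real \<Rightarrow> real) \<Rightarrow> real \<Rightarrow> real \<Rightarrow> real" where
  "a_delta w \<delta> x = (LINT y:{0<..<1}|lborel. w_delta w \<delta> x y)"

definition b_delta :: "(real \<Rightarrow> real) \<Rightarrow> real \<Rightarrow> real \<Rightarrow> real" where
  "b_delta w \<delta> x =
     (if x \<in> {0<..<\<delta>} then
        2 / (x + \<delta>)^2 * (LINT y:{x - \<delta>..0}|lborel. (x - y) * w_delta w \<delta> x y)
      else if x \<in> {1 - \<delta><..<1} then
        2 / (1 - x + \<delta>)^2 * (LINT y:{1..x + \<delta>}|lborel. (y - x) * w_delta w \<delta> x y)
      else 0)"

definition wt_delta :: "(real \<Rightarrow> real) \<Rightarrow> real \<Rightarrow> real \<Rightarrow> real \<Rightarrow> real" where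
  "wt_delta w \<delta> x y =
     \<bar>w_delta w \<delta> x y - b_delta w \<delta> x * indicator {0<..<\<delta>} \<bar>y - x\<bar>\<bar>"

definition A2s :: "(real \<Rightarrow> real) \<Rightarrow> real \<Rightarrow> bool" where
  "A2s w \<delta> \<longleftrightarrow>
     (\<forall>x\<in>{0<..<1::real}.
        measure lborel {y\<in>{0<..<1}. w_delta w \<delta> x y - b_delta w \<delta> x * indicator {0..\<delta>} \<bar>y - x\<bar> \<ge> 0}
        \<ge> measure lborel {y\<in>{0<..<1}. w_delta w \<delta> x y - b_delta w \<delta> x * indicator {0..\<delta>} \<bar>y - x\<bar> \<le> 0})"

end

theory Submission
  imports Defs
begin

(* Write W y = w_delta(x,y) and B = b_delta(x); then 0 <= B <= 2 w(0) delta^-3, and the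
   integrand W - wt of a_delta(x) - int wt equals W - |W - B| on 0 < |y - x| < delta and
   vanishes elsewhere. So it is >= -B, equals B where W >= B, and equals 2W - B where W <= B.
   If B <= delta^-3 w(7/8), then W >= B on |y - x| <= 7 delta/8, which contains an interval
   of length 7 delta/8 inside (0,1), and the integrand can only be negative on
   7 delta/8 < |y - x| < delta, of measure delta/4; this leaves at least 5 delta B/8.
   Otherwise W < B on that annulus, and the integrand is bounded below by B on the set
   {W >= B} of (A2s), by -B on its set {W <= B}, and by 2 delta^-3 w(15/16) - B on an
   interval of length delta/16 in the annulus. By (A2s) the first two contributions sum to
   something nonnegative, leaving delta^-2 w(15/16)/8, which dominates delta B up to the
   factor w(15/16)/(16 w(0)). *)

lemma A1_nonneg: "A1 w \<Longrightarrow> 0 \<le> r \<Longrightarrow> 0 \<le> w r"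
  unfolding A1_def by auto

lemma A1_eq_0: "A1 w \<Longrightarrow> 1 \<le> r \<Longrightarrow> w r = 0"
  unfolding A1_def by auto

lemma A1_pos: "A1 w \<Longrightarrow> 0 < r \<Longrightarrow> r < 1 \<Longrightarrow> 0 < w r"
  unfolding A1_def by auto

lemma A1_antimono:
  assumes "A1 w" "0 \<le> r" "r \<le> s"
  shows "w s \<le> w r"
proof (cases "s < 1")
  case True
  then show ?thesis using assms unfolding A1_def by auto
next
  case False
  then show ?thesis using A1_eq_0[OF assms(1), of s] A1_nonneg[OF assms(1,2)] by simp
qed

lemma A1_pos_0: "A1 w \<Longrightarrow> 0 < w 0"
  using A1_pos[of w "1/2"] A1_antimono[of w 0 "1/2"] by simp

lemma borel_measurable_w_delta:
  assumes "A1 w" "0 < \<delta>"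
  shows "w_delta w \<delta> x \<in> borel_measurable borel"
proof -
  \<comment> \<open>\<open>w\<close> is only antitone on \<open>[0,\<infinity>)\<close>; \<open>g\<close> is a monotone function on all of \<open>\<real>\<close>.\<close>
  define g where "g r = - w (max r 0)" for r
  have "mono g"
    unfolding g_def mono_def using A1_antimono[OF assms(1)] by (simp add: max_def)
  then have [measurable]: "g \<in> borel_measurable borel"
    by (rule borel_measurable_mono)
  have "w_delta w \<delta> x = (\<lambda>y. - (\<delta> powi (-3)) * g (\<bar>x - y\<bar> / \<delta>))"
    using assms(2) by (simp add: w_delta_def g_def fun_eq_iff)
  then show ?thesis by simp
qed

lemma w_delta_nonneg: "A1 w \<Longrightarrow> 0 < \<delta> \<Longrightarrow> 0 \<le> w_delta w \<delta> x y"
  unfolding w_delta_def by (simp add: A1_nonneg)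

lemma w_delta_eq_0:
  assumes "A1 w" "0 < \<delta>" "\<delta> \<le> \<bar>y - x\<bar>"
  shows "w_delta w \<delta> x y = 0"
proof -
  have "1 \<le> \<bar>x - y\<bar> / \<delta>"
    using assms by (simp add: field_simps abs_minus_commute)
  then show ?thesis unfolding w_delta_def using A1_eq_0[OF assms(1)] by simp
qed

lemma w_delta_le:
  assumes "A1 w" "0 < \<delta>" "0 \<le> r" "r * \<delta> \<le> \<bar>y - x\<bar>"
  shows "w_delta w \<delta> x y \<le> \<delta> powi (-3) * w r"
proof -
  have "r \<le> \<bar>x - y\<bar> / \<delta>"
    using assms by (simp add: field_simps abs_minus_commute)
  then show ?thesis
    unfolding w_delta_def using assms A1_antimono by (simp add: mult_left_mono)
qed

lemma w_delta_ge:
  assumes "A1 w" "0 < \<delta>" "\<bar>y - x\<bar> \<le> r * \<delta>"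
  shows "\<delta> powi (-3) * w r \<le> w_delta w \<delta> x y"
proof -
  have "\<bar>x - y\<bar> / \<delta> \<le> r"
    using assms by (simp add: field_simps abs_minus_commute)
  then show ?thesis
    unfolding w_delta_def using assms A1_antimono by (simp add: mult_left_mono)
qed

lemma dist_mult_w_delta_le:
  assumes "A1 w" "0 < \<delta>"
  shows "\<bar>y - x\<bar> * w_delta w \<delta> x y \<le> \<delta> * (\<delta> powi (-3) * w 0)"
proof (cases "\<bar>y - x\<bar> < \<delta>")
  case True
  then show ?thesis
    using w_delta_le[OF assms, of 0] w_delta_nonneg[OF assms] by (simp add: mult_mono)
next
  case False
  then show ?thesis
    using w_delta_eq_0[OF assms] A1_nonneg[OF assms(1), of 0] assms(2) by simp
qed

lemma set_integral_Icc_bounds: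
  fixes f :: "real \<Rightarrow> real"
  assumes "l \<le> u" and bounds: "\<And>y. y \<in> {l..u} \<Longrightarrow> 0 \<le> f y \<and> f y \<le> K"
  shows "0 \<le> (LINT y:{l..u}|lborel. f y)" "(LINT y:{l..u}|lborel. f y) \<le> K * (u - l)"
proof -
  have pointwise: "0 \<le> indicator {l..u} y * f y \<and> indicator {l..u} y * f y \<le> K * indicator {l..u} y" for y
    using bounds by (simp add: indicator_def)
  show "0 \<le> (LINT y:{l..u}|lborel. f y)"
    unfolding set_lebesgue_integral_def using pointwise by (intro integral_nonneg_AE) simp
  have "(LINT y:{l..u}|lborel. f y) \<le> (\<integral>y. K * indicator {l..u} y \<partial>lborel)"
    unfolding set_lebesgue_integral_def using pointwise bounds[of l] assms(1)
    by (intro integral_mono_AE') auto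
  also have "\<dots> = K * (u - l)"
    using assms(1) by simp
  finally show "(LINT y:{l..u}|lborel. f y) \<le> K * (u - l)" .
qed

lemma scaled_moment_w_delta_bounds:
  fixes x :: real
  assumes "A1 w" "0 < \<delta>" "l \<le> u" "u - l \<le> \<delta>"
  defines "m \<equiv> 2 / (2 * \<delta> - (u - l))^2 * (LINT y:{l..u}|lborel. \<bar>y - x\<bar> * w_delta w \<delta> x y)"
  shows "0 \<le> m \<and> m \<le> 2 * w 0 * \<delta> powi (-3)"
proof -
  define I where "I = (LINT y:{l..u}|lborel. \<bar>y - x\<bar> * w_delta w \<delta> x y)"
  have I: "0 \<le> I" "I \<le> \<delta> * (\<delta> powi (-3) * w 0) * (u - l)"
    unfolding I_def using dist_mult_w_delta_le[OF assms(1,2)] w_delta_nonneg[OF assms(1,2)] assms(3)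
    by (auto intro!: set_integral_Icc_bounds)
  define e K where "e = u - l" and "K = \<delta> powi (-3) * w 0"
  have K: "0 \<le> K"
    unfolding K_def using assms(2) A1_nonneg[OF assms(1), of 0] by simp
  have denom: "0 < (2 * \<delta> - e)^2"
    using assms(2,4) unfolding e_def by simp
  have "e * \<delta> \<le> (2 * \<delta> - e)^2"
    using assms(3,4) unfolding e_def by (simp add: power2_eq_square mult_mono)
  then have ratio: "\<delta> * e / (2 * \<delta> - e)^2 \<le> 1"
    using denom by (simp add: mult.commute)
  have m: "m = 2 / (2 * \<delta> - e)^2 * I"
    unfolding m_def I_def e_def ..
  have "m \<le> 2 / (2 * \<delta> - e)^2 * (\<delta> * K * e)"
    unfolding m using I denom by (intro mult_left_mono) (simp_all add: K_def e_def)
  also have "\<dots> = 2 * K * (\<delta> * e / (2 * \<delta> - e)^2)"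
    by simp
  also have "\<dots> \<le> 2 * K"
    using mult_left_le[OF ratio, of "2 * K"] K by simp
  finally show ?thesis
    using m I(1) denom by (simp add: K_def mult.commute)
qed

lemma b_delta_bounds:
  assumes "A1 w" "0 < \<delta>"
  shows "0 \<le> b_delta w \<delta> x \<and> b_delta w \<delta> x \<le> 2 * w 0 * \<delta> powi (-3)"
proof -
  consider (left) "x \<in> {0<..<\<delta>}" | (right) "x \<notin> {0<..<\<delta>}" "x \<in> {1 - \<delta><..<1}"
    | (interior) "x \<notin> {0<..<\<delta>}" "x \<notin> {1 - \<delta><..<1}"
    by blast
  then show ?thesis
  proof cases
    case left
    have "(LINT y:{x - \<delta>..0}|lborel. (x - y) * w_delta w \<delta> x y)
        = (LINT y:{x - \<delta>..0}|lborel. \<bar>y - x\<bar> * w_delta w \<delta> x y)"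
      using left by (intro set_lebesgue_integral_cong) auto
    then show ?thesis
      using left scaled_moment_w_delta_bounds[OF assms, of "x - \<delta>" 0 x]
      by (simp add: b_delta_def algebra_simps)
  next
    case right
    have "(LINT y:{1..x + \<delta>}|lborel. (y - x) * w_delta w \<delta> x y)
        = (LINT y:{1..x + \<delta>}|lborel. \<bar>y - x\<bar> * w_delta w \<delta> x y)"
      using right by (intro set_lebesgue_integral_cong) auto
    moreover have "b_delta w \<delta> x =
        2 / (1 - x + \<delta>)^2 * (LINT y:{1..x + \<delta>}|lborel. (y - x) * w_delta w \<delta> x y)"
      using right unfolding b_delta_def by (simp only: if_False if_True)
    ultimately show ?thesis
      using right scaled_moment_w_delta_bounds[OF assms, of 1 "x + \<delta>" x]
      by (simp add: algebra_simps)
  next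
    case interior
    then have "b_delta w \<delta> x = 0"
      unfolding b_delta_def by (simp only: if_False)
    then show ?thesis
      using assms(2) A1_nonneg[OF assms(1), of 0] by simp
  qed
qed

lemma w_delta_minus_wt_delta:
  assumes "A1 w" "0 < \<delta>"
  shows "w_delta w \<delta> x y - wt_delta w \<delta> x y =
    (if 0 < \<bar>y - x\<bar> \<and> \<bar>y - x\<bar> < \<delta>
     then w_delta w \<delta> x y - \<bar>w_delta w \<delta> x y - b_delta w \<delta> x\<bar> else 0)"
  using w_delta_nonneg[OF assms] w_delta_eq_0[OF assms]
  by (auto simp: wt_delta_def indicator_def)

lemma set_integrable_bounded_unit_interval:
  fixes f :: "real \<Rightarrow> real"
  assumes "f \<in> borel_measurable borel" "\<And>y. \<bar>f y\<bar> \<le> K"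
  shows "set_integrable lborel {0<..<1} f"
  unfolding set_integrable_def
  by (rule integrableI_bounded_set_indicator[where B = K]) (use assms in auto)

lemma
  assumes "A1 w" "0 < \<delta>"
  shows set_integrable_w_delta: "set_integrable lborel {0<..<1} (w_delta w \<delta> x)"
    and set_integrable_wt_delta: "set_integrable lborel {0<..<1} (wt_delta w \<delta> x)"
proof -
  note [measurable] = borel_measurable_w_delta[OF assms]
  define M where "M = \<delta> powi (-3) * w 0"
  have W: "0 \<le> w_delta w \<delta> x y" "w_delta w \<delta> x y \<le> M" for y
    using w_delta_nonneg[OF assms] w_delta_le[OF assms, of 0] unfolding M_def by auto
  have B: "0 \<le> b_delta w \<delta> x"
    using b_delta_bounds[OF assms] by simp
  show "set_integrable lborel {0<..<1} (w_delta w \<delta> x)"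
    using W by (intro set_integrable_bounded_unit_interval[where K = M]) auto
  show "set_integrable lborel {0<..<1} (wt_delta w \<delta> x)"
  proof (rule set_integrable_bounded_unit_interval[where K = "M + b_delta w \<delta> x"])
    show "wt_delta w \<delta> x \<in> borel_measurable borel"
      unfolding wt_delta_def by measurable
    show "\<bar>wt_delta w \<delta> x y\<bar> \<le> M + b_delta w \<delta> x" for y
      using W[of y] B by (auto simp: wt_delta_def indicator_def)
  qed
qed

lemma w_delta_minus_wt_delta_far:
  "A1 w \<Longrightarrow> 0 < \<delta> \<Longrightarrow> \<delta> \<le> \<bar>y - x\<bar> \<Longrightarrow> w_delta w \<delta> x y - wt_delta w \<delta> x y = 0"
  by (simp add: w_delta_minus_wt_delta)

lemma w_delta_minus_wt_delta_ge:
  assumes "A1 w" "0 < \<delta>"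
  shows "- b_delta w \<delta> x \<le> w_delta w \<delta> x y - wt_delta w \<delta> x y"
  using w_delta_minus_wt_delta[OF assms] w_delta_nonneg[OF assms] b_delta_bounds[OF assms]
  by (smt (verit))

lemma w_delta_minus_wt_delta_eq_b_delta:
  assumes "A1 w" "0 < \<delta>" "y \<noteq> x" "b_delta w \<delta> x \<le> w_delta w \<delta> x y"
  shows "w_delta w \<delta> x y - wt_delta w \<delta> x y = b_delta w \<delta> x"
  using w_delta_minus_wt_delta[OF assms(1,2)] w_delta_eq_0[OF assms(1,2)] b_delta_bounds[OF assms(1,2)] assms(3,4)
  by (smt (verit))

lemma w_delta_minus_wt_delta_ge_twice_w_delta:
  assumes "A1 w" "0 < \<delta>" "y \<noteq> x" "w_delta w \<delta> x y \<le> b_delta w \<delta> x"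
  shows "2 * w_delta w \<delta> x y - b_delta w \<delta> x \<le> w_delta w \<delta> x y - wt_delta w \<delta> x y"
  using w_delta_minus_wt_delta[OF assms(1,2)] w_delta_eq_0[OF assms(1,2)] b_delta_bounds[OF assms(1,2)] assms(3,4)
  by (smt (verit))

lemma set_integrable_w_delta_minus_wt_delta:
  "A1 w \<Longrightarrow> 0 < \<delta> \<Longrightarrow> set_integrable lborel {0<..<1} (\<lambda>y. w_delta w \<delta> x y - wt_delta w \<delta> x y)"
  using set_integrable_w_delta set_integrable_wt_delta by (rule set_integral_diff(1))

lemma integral_le_set_integral:
  fixes F g :: "'a \<Rightarrow> real"
  assumes "integrable M F" "set_integrable M A g" "AE y in M. F y \<le> (if y \<in> A then g y else 0)"
  shows "integral\<^sup>L M F \<le> (LINT y:A|M. g y)"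
  unfolding set_lebesgue_integral_def
  using assms unfolding set_integrable_def by (intro integral_mono_AE) (auto simp: indicator_def)

lemma interval_in_unit_annulus:
  fixes x s t :: real
  assumes "0 < x" "x < 1" "0 \<le> s" "s < t" "t < 1/2"
  obtains J where "J \<subseteq> {0<..<1}" "integrable lborel (indicator J :: real \<Rightarrow> real)"
    "measure lborel J = t - s" "\<And>y. y \<in> J \<Longrightarrow> s < \<bar>y - x\<bar> \<and> \<bar>y - x\<bar> < t"
proof (cases "x \<le> 1/2")
  case True
  show ?thesis
    by (rule that[of "{x + s<..<x + t}"]) (use assms True in auto)
next
  case False
  show ?thesis
    by (rule that[of "{x - t<..<x - s}"]) (use assms False in auto)
qed

lemma a_delta_minus_integral_wt_delta:
  assumes "A1 w" "0 < \<delta>"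
  shows "a_delta w \<delta> x - (LINT y:{0<..<1}|lborel. wt_delta w \<delta> x y)
    = (LINT y:{0<..<1}|lborel. w_delta w \<delta> x y - wt_delta w \<delta> x y)"
  unfolding a_delta_def
  using set_integrable_w_delta[OF assms] set_integrable_wt_delta[OF assms]
  by (simp add: set_integral_diff)

context
  fixes w :: "real \<Rightarrow> real" and \<delta> x :: real
  assumes A1: "A1 w" and \<delta>: "0 < \<delta>" "\<delta> < 1/2" and x: "0 < x" "x < 1"
begin

lemma w_delta_minus_wt_delta_ge_step_if_b_small:
  assumes small: "b_delta w \<delta> x \<le> \<delta> powi (-3) * w (7/8)"
    and I: "I \<subseteq> {0<..<1}" "\<And>y. y \<in> I \<Longrightarrow> 0 < \<bar>y - x\<bar> \<and> \<bar>y - x\<bar> < 7/8 * \<delta>"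
  defines "B \<equiv> b_delta w \<delta> x"
  shows "B * indicator I y - B * indicator {x - \<delta>..x - 7/8 * \<delta>} y - B * indicator {x + 7/8 * \<delta>..x + \<delta>} y
    \<le> (if y \<in> {0<..<1} then w_delta w \<delta> x y - wt_delta w \<delta> x y else 0)"
proof -
  define g where "g y = w_delta w \<delta> x y - wt_delta w \<delta> x y" for y
  have B: "0 \<le> B"
    unfolding B_def using b_delta_bounds[OF A1 \<delta>(1)] by simp
  have g_ge: "- B \<le> g y"
    unfolding g_def B_def by (rule w_delta_minus_wt_delta_ge[OF A1 \<delta>(1)])
  have g_eq: "g y = B" if "0 < \<bar>y - x\<bar>" "\<bar>y - x\<bar> \<le> 7/8 * \<delta>"
    unfolding g_def B_def using that small w_delta_ge[OF A1 \<delta>(1), of y x "7/8"]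
    by (intro w_delta_minus_wt_delta_eq_b_delta[OF A1 \<delta>(1)]) auto
  consider "y \<in> I" | "y \<notin> I" "7/8 * \<delta> < \<bar>y - x\<bar>" "\<bar>y - x\<bar> < \<delta>"
    | "y \<notin> I" "\<bar>y - x\<bar> \<le> 7/8 * \<delta> \<or> \<delta> \<le> \<bar>y - x\<bar>"
    by fastforce
  then show ?thesis
  proof cases
    case 1
    then show ?thesis
      using I(1) I(2)[OF 1] g_eq by (auto simp: g_def abs_real_def split: if_splits)
  next
    case 2
    then have "y \<in> {x - \<delta>..x - 7/8 * \<delta>} \<or> y \<in> {x + 7/8 * \<delta>..x + \<delta>}"
      by (auto simp: abs_real_def split: if_splits)
    then show ?thesis
      using 2 g_ge B by (auto simp: g_def indicator_def)
  next
    case 3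
    then have "0 \<le> g y"
      using g_eq B w_delta_minus_wt_delta[OF A1 \<delta>(1), of x y] unfolding g_def by fastforce
    then show ?thesis
      using 3(1) B by (auto simp: g_def indicator_def)
  qed
qed

lemma integral_w_delta_minus_wt_delta_ge_if_b_small:
  assumes small: "b_delta w \<delta> x \<le> \<delta> powi (-3) * w (7/8)"
  shows "\<delta> * b_delta w \<delta> x / 2 \<le> (LINT y:{0<..<1}|lborel. w_delta w \<delta> x y - wt_delta w \<delta> x y)"
proof -
  define B where "B = b_delta w \<delta> x"
  define L1 L2 where "L1 = {x - \<delta>..x - 7/8 * \<delta>}" and "L2 = {x + 7/8 * \<delta>..x + \<delta>}"
  have B: "0 \<le> B"
    unfolding B_def using b_delta_bounds[OF A1 \<delta>(1)] by simp
  obtain I where I: "I \<subseteq> {0<..<1}" "integrable lborel (indicator I :: real \<Rightarrow> real)"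
    "measure lborel I = 7/8 * \<delta>" "\<And>y. y \<in> I \<Longrightarrow> 0 < \<bar>y - x\<bar> \<and> \<bar>y - x\<bar> < 7/8 * \<delta>"
    using interval_in_unit_annulus[OF x, of 0 "7/8 * \<delta>"] \<delta> by auto
  define F where "F = (\<lambda>y. B * indicator I y - B * indicator L1 y - B * indicator L2 y)"
  have L: "integrable lborel (indicator L1 :: real \<Rightarrow> real)" "integrable lborel (indicator L2 :: real \<Rightarrow> real)"
    unfolding L1_def L2_def using \<delta>(1) by (auto intro!: integrable_real_indicator)
  have "integral\<^sup>L lborel F \<le> (LINT y:{0<..<1}|lborel. w_delta w \<delta> x y - wt_delta w \<delta> x y)"
    using I(2) L set_integrable_w_delta_minus_wt_delta[OF A1 \<delta>(1)]
      w_delta_minus_wt_delta_ge_step_if_b_small[OF small I(1) I(4)]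
    by (intro integral_le_set_integral) (auto simp: F_def L1_def L2_def B_def)
  moreover have "integral\<^sup>L lborel F = B * measure lborel I - B * measure lborel L1 - B * measure lborel L2"
    using I(2) L by (simp add: F_def)
  moreover have "measure lborel L1 = \<delta> / 8" "measure lborel L2 = \<delta> / 8"
    using \<delta>(1) by (simp_all add: L1_def L2_def)
  ultimately show ?thesis
    using mult_nonneg_nonneg[OF B less_imp_le[OF \<delta>(1)]] unfolding I(3) B_def by (simp add: algebra_simps)
qed

lemma w_delta_minus_wt_delta_ge_step_if_b_large:
  assumes large: "\<delta> powi (-3) * w (7/8) < b_delta w \<delta> x"
    and J: "J \<subseteq> {0<..<1}" "\<And>y. y \<in> J \<Longrightarrow> 7/8 * \<delta> < \<bar>y - x\<bar> \<and> \<bar>y - x\<bar> < 15/16 * \<delta>"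
    and "y \<noteq> x"
  defines "B \<equiv> b_delta w \<delta> x"
    and "S1 \<equiv> {y\<in>{0<..<1}. w_delta w \<delta> x y - b_delta w \<delta> x * indicator {0..\<delta>} \<bar>y - x\<bar> \<ge> 0}"
    and "S2 \<equiv> {y\<in>{0<..<1}. w_delta w \<delta> x y - b_delta w \<delta> x * indicator {0..\<delta>} \<bar>y - x\<bar> \<le> 0}"
  shows "B * indicator S1 y - B * indicator S2 y + 2 * (\<delta> powi (-3) * w (15/16)) * indicator J y
    \<le> (if y \<in> {0<..<1} then w_delta w \<delta> x y - wt_delta w \<delta> x y else 0)"
proof -
  define W g where "W = w_delta w \<delta> x" and "g y = W y - wt_delta w \<delta> x y" for y
  have "0 < \<delta> powi (-3) * w (7/8)"
    using A1_pos[OF A1, of "7/8"] \<delta>(1) by simp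
  then have B: "0 < B"
    using large unfolding B_def by linarith
  have g_ge: "- B \<le> g y"
    unfolding g_def W_def B_def by (rule w_delta_minus_wt_delta_ge[OF A1 \<delta>(1)])
  consider "y \<notin> {0<..<1}" | "y \<in> {0<..<1}" "\<delta> \<le> \<bar>y - x\<bar>"
    | "y \<in> {0<..<1}" "\<bar>y - x\<bar> < \<delta>" "y \<in> J" | "y \<in> {0<..<1}" "\<bar>y - x\<bar> < \<delta>" "y \<notin> J"
    by fastforce
  then show ?thesis
  proof cases
    case 1
    then have "y \<notin> J"
      using J(1) by blast
    then show ?thesis
      using 1 by (auto simp: S1_def S2_def)
  next
    case 2
    then have "W y = 0" "g y = 0" "y \<notin> J"
      using w_delta_eq_0[OF A1 \<delta>(1)] w_delta_minus_wt_delta_far[OF A1 \<delta>(1)] J(2)[of y] \<delta>(1)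
      by (auto simp: W_def g_def)
    then show ?thesis
      using 2 B by (auto simp: S1_def S2_def W_def g_def B_def indicator_def)
  next
    case 3
    have "\<delta> powi (-3) * w (15/16) \<le> W y" "W y < B"
      using J(2)[OF 3(3)] large w_delta_ge[OF A1 \<delta>(1), of y x "15/16"] w_delta_le[OF A1 \<delta>(1), of "7/8" y x]
      by (auto simp: W_def B_def)
    moreover have "2 * W y - B \<le> g y"
      using \<open>W y < B\<close> \<open>y \<noteq> x\<close> unfolding W_def g_def B_def
      by (intro w_delta_minus_wt_delta_ge_twice_w_delta[OF A1 \<delta>(1)]) auto
    ultimately show ?thesis
      using 3 by (auto simp: S1_def S2_def W_def g_def B_def indicator_def)
  next
    case 4
    have "g y = B" if "B \<le> W y"
      using that \<open>y \<noteq> x\<close> unfolding W_def g_def B_def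
      by (intro w_delta_minus_wt_delta_eq_b_delta[OF A1 \<delta>(1)])
    then show ?thesis
      using 4 g_ge B by (auto simp: S1_def S2_def W_def g_def B_def indicator_def)
  qed
qed

lemma integral_w_delta_minus_wt_delta_ge_if_b_large:
  assumes large: "\<delta> powi (-3) * w (7/8) < b_delta w \<delta> x" and "A2s w \<delta>"
  shows "\<delta> * (\<delta> powi (-3) * w (15/16)) / 8 \<le> (LINT y:{0<..<1}|lborel. w_delta w \<delta> x y - wt_delta w \<delta> x y)"
proof -
  note [measurable] = borel_measurable_w_delta[OF A1 \<delta>(1)]
  define B c where "B = b_delta w \<delta> x" and "c = \<delta> powi (-3) * w (15/16)"
  define S1 where "S1 = {y\<in>{0<..<1}. w_delta w \<delta> x y - B * indicator {0..\<delta>} \<bar>y - x\<bar> \<ge> 0}"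
  define S2 where "S2 = {y\<in>{0<..<1}. w_delta w \<delta> x y - B * indicator {0..\<delta>} \<bar>y - x\<bar> \<le> 0}"
  have B: "0 \<le> B"
    unfolding B_def using b_delta_bounds[OF A1 \<delta>(1)] by simp
  have S: "measure lborel S2 \<le> measure lborel S1"
    using assms(2) x unfolding A2s_def S1_def S2_def B_def by auto
  have indicator_integrable: "integrable lborel (indicator S :: real \<Rightarrow> real)"
    if "S \<subseteq> {0<..<1}" "S \<in> sets lborel" for S
  proof (rule integrable_real_indicator[OF that(2)])
    have "emeasure lborel S \<le> emeasure lborel {0<..<1::real}"
      using that(1) by (rule emeasure_mono) simp
    then show "emeasure lborel S < \<infinity>"
      by (simp add: order_le_less_trans)
  qed
  have "S1 \<in> sets lborel" "S2 \<in> sets lborel"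
    unfolding S1_def S2_def by measurable
  then have S_int: "integrable lborel (indicator S1 :: real \<Rightarrow> real)" "integrable lborel (indicator S2 :: real \<Rightarrow> real)"
    by (auto intro!: indicator_integrable simp: S1_def S2_def)
  obtain J where J: "J \<subseteq> {0<..<1}" "integrable lborel (indicator J :: real \<Rightarrow> real)"
    "measure lborel J = \<delta> / 16" "\<And>y. y \<in> J \<Longrightarrow> 7/8 * \<delta> < \<bar>y - x\<bar> \<and> \<bar>y - x\<bar> < 15/16 * \<delta>"
    using interval_in_unit_annulus[OF x, of "7/8 * \<delta>" "15/16 * \<delta>"] \<delta> by auto
  define F where "F = (\<lambda>y. B * indicator S1 y - B * indicator S2 y + 2 * c * indicator J y)"
  have F_le: "F y \<le> (if y \<in> {0<..<1} then w_delta w \<delta> x y - wt_delta w \<delta> x y else 0)"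
    if "y \<noteq> x" for y
    using w_delta_minus_wt_delta_ge_step_if_b_large[OF large J(1) J(4) that]
    by (simp add: F_def S1_def S2_def B_def c_def)
  have "AE y in lborel. F y \<le> (if y \<in> {0<..<1} then w_delta w \<delta> x y - wt_delta w \<delta> x y else 0)"
    by (rule AE_mp[OF AE_lborel_singleton[of x]]) (intro AE_I2 impI F_le)
  then have "integral\<^sup>L lborel F \<le> (LINT y:{0<..<1}|lborel. w_delta w \<delta> x y - wt_delta w \<delta> x y)"
    using S_int J(2) set_integrable_w_delta_minus_wt_delta[OF A1 \<delta>(1)]
    by (intro integral_le_set_integral) (auto simp: F_def)
  moreover have "integral\<^sup>L lborel F = B * measure lborel S1 - B * measure lborel S2 + 2 * c * measure lborel J"
    using S_int J(2) by (simp add: F_def)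
  moreover have "B * measure lborel S2 \<le> B * measure lborel S1"
    using S B by (rule mult_left_mono)
  ultimately show ?thesis
    unfolding J(3) c_def by simp
qed

lemma a_delta_minus_integral_wt_delta_ge:
  assumes "A2s w \<delta>"
  shows "min (1/2) (w (15/16) / (16 * w 0)) * \<delta> * b_delta w \<delta> x
    \<le> a_delta w \<delta> x - (LINT y:{0<..<1}|lborel. wt_delta w \<delta> x y)"
proof -
  define C where "C = min (1/2) (w (15/16) / (16 * w 0))"
  have w0: "0 < w 0"
    using A1_pos_0[OF A1] .
  have B: "0 \<le> b_delta w \<delta> x" "b_delta w \<delta> x \<le> 2 * w 0 * \<delta> powi (-3)"
    using b_delta_bounds[OF A1 \<delta>(1)] by auto
  have "C * \<delta> * b_delta w \<delta> x \<le> (LINT y:{0<..<1}|lborel. w_delta w \<delta> x y - wt_delta w \<delta> x y)"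
  proof (cases "b_delta w \<delta> x \<le> \<delta> powi (-3) * w (7/8)")
    case True
    have "C * \<delta> * b_delta w \<delta> x \<le> 1/2 * \<delta> * b_delta w \<delta> x"
      using B \<delta>(1) by (intro mult_right_mono) (auto simp: C_def)
    then show ?thesis
      using integral_w_delta_minus_wt_delta_ge_if_b_small[OF True] by simp
  next
    case False
    have "C * \<delta> * b_delta w \<delta> x \<le> w (15/16) / (16 * w 0) * \<delta> * (2 * w 0 * \<delta> powi (-3))"
      using B \<delta>(1) w0 A1_pos[OF A1, of "15/16"] by (intro mult_mono) (auto simp: C_def)
    also have "\<dots> = \<delta> * (\<delta> powi (-3) * w (15/16)) / 8"
      using w0 by (simp add: field_simps)
    also have "\<dots> \<le> (LINT y:{0<..<1}|lborel. w_delta w \<delta> x y - wt_delta w \<delta> x y)"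
      using integral_w_delta_minus_wt_delta_ge_if_b_large[OF _ assms] False by simp
    finally show ?thesis .
  qed
  then show ?thesis
    unfolding C_def a_delta_minus_integral_wt_delta[OF A1 \<delta>(1)] .
qed

end

theorem mainTheorem6:
  fixes w :: "real \<Rightarrow> real"
  assumes "A1 w"
    and "\<forall>\<delta>\<in>{0<..<1/2}. A2s w \<delta>"
  shows "\<exists>C>0. \<forall>\<delta>\<in>{0<..<1/2::real}. \<forall>x\<in>{0<..<1::real}.
           a_delta w \<delta> x - (LINT y:{0<..<1}|lborel. wt_delta w \<delta> x y) \<ge> C * \<delta> * b_delta w \<delta> x"
proof (intro exI conjI ballI)
  show "0 < min (1/2) (w (15/16) / (16 * w 0))"
    using A1_pos_0[OF assms(1)] A1_pos[OF assms(1), of "15/16"] by simp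
  fix \<delta> x :: real
  assume "\<delta> \<in> {0<..<1/2}" "x \<in> {0<..<1}"
  then show "min (1/2) (w (15/16) / (16 * w 0)) * \<delta> * b_delta w \<delta> x
      \<le> a_delta w \<delta> x - (LINT y:{0<..<1}|lborel. wt_delta w \<delta> x y)"
    using a_delta_minus_integral_wt_delta_ge[OF assms(1)] assms(2) by simp
qed

end
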